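(* Let $J=p\ge1$, $\sigma_\varepsilon^2>0$, $\sigma_\gamma^2>0$, $0\le\rho\le1$, and let $\mathbf{\Sigma}_\gamma=\sigma_\gamma^2\big((1-\rho)\mathbf{I}_J+\rho\mathbf{1}_J\mathbf{1}_J^{\mathrm T}\big)$ (compound symmetry). Let $\mathbf{A}_{\bm\beta}$ be a nonsingular $J\times J$ matrix and $I$ a positive integer. For an exact design $\xi=(I_1,\dots,I_J)$ (nonnegative integers with $\sum_jI_j=I$) let $$\mathbf{M}_{\bm\beta}(\xi)=\mathbf{A}_{\bm\beta}^{\mathrm T}\mathbf{M}_0(\xi)^{1/2}\big(\sigma_\varepsilon^2\mathbf{I}_J+\mathbf{M}_0(\xi)^{1/2}\mathbf{\Sigma}_\gamma\mathbf{M}_0(\xi)^{1/2}\big)^{-1}\mathbf{M}_0(\xi)^{1/2}\mathbf{A}_{\bm\beta},\quad \mathbf{M}_0(\xi)^{1/2}=\mathrm{diag}(\sqrt{I_1},\dots,\sqrt{I_J}).$$ Then an exact design is $D$-optimal among exact designs if $I_j^*=[I/J]+1$ for $J'=I \bmod J$ of the time points and $I_j^*=[I/J]$ for the remaining $J-J'$ time points. In particular, if $I$ is a multiple of $J$, the uniform design with $I_j^*=I/J$ for all $j=1,\dots,J$ is $D$-optimal.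
   Context: $[a]$ denotes the integer part of $a$ and $m\bmod n=m-n[m/n]$. $\mathbf{A}_{\bm\beta}$ is the Jacobian of the mean response curve at a fixed parameter $\bm\beta$ with as many parameters as time points. $\bm\beta$ is estimable under $\xi$ if $\mathbf{A}_{\bm\beta}$ has full column rank and its columns lie in the column space of $\mathrm{diag}(I_1,\dots,I_J)$ (here: all $I_j>0$). A design $\xi^*$ is $D$-optimal if $\log\det\mathbf{M}_{\bm\beta}(\xi^* )\ge\log\det\mathbf{M}_{\bm\beta}(\xi)$ for all designs $\xi$ (of the considered class, with total $I$) under which $\bm\beta$ is estimable. *)

theory Defs
  imports "HOL-Analysis.Analysis"
begin

text \<open>Time points are indexed by a finite type 'n, so J = CARD('n).
  An exact design is xi :: 'n => nat (numbers I_j of subjects at time point j).\<close>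

definition exact_design :: "nat \<Rightarrow> ('n::finite \<Rightarrow> nat) \<Rightarrow> bool" where
  "exact_design I xi \<longleftrightarrow> (\<Sum>j\<in>UNIV. xi j) = I"

definition Sigma_cs :: "real \<Rightarrow> real \<Rightarrow> real^'n^'n" where
  "Sigma_cs sg2 rho = sg2 *\<^sub>R ((1 - rho) *\<^sub>R mat 1 + rho *\<^sub>R (\<chi> i j. 1))"

definition M0_half :: "('n::finite \<Rightarrow> nat) \<Rightarrow> real^'n^'n" where
  "M0_half xi = (\<chi> i j. if i = j then sqrt (real (xi i)) else 0)"

definition info_matrix ::
  "real^'n^'n \<Rightarrow> real \<Rightarrow> real^'n^'n \<Rightarrow> ('n::finite \<Rightarrow> nat) \<Rightarrow> real^'n^'n" where
  "info_matrix A se2 Sg xi =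
     transpose A ** M0_half xi **
     matrix_inv (se2 *\<^sub>R mat 1 + M0_half xi ** Sg ** M0_half xi) **
     M0_half xi ** A"

text \<open>Estimability: A has full column rank and its columns lie in the column space
  of diag(I_1,...,I_J); as stated in the paper this amounts to all I_j > 0.\<close>
definition estimable :: "real^'n^'n \<Rightarrow> ('n::finite \<Rightarrow> nat) \<Rightarrow> bool" where
  "estimable A xi \<longleftrightarrow> rank A = CARD('n) \<and> (\<forall>j. xi j > 0)"

definition D_optimal_exact ::
  "real^'n^'n \<Rightarrow> real \<Rightarrow> real^'n^'n \<Rightarrow> nat \<Rightarrow> ('n::finite \<Rightarrow> nat) \<Rightarrow> bool" where
  "D_optimal_exact A se2 Sg I xs \<longleftrightarrow> exact_design I xs \<and>
     (\<forall>xi. exact_design I xi \<and> estimable A xi \<longrightarrow>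
        ln (det (info_matrix A se2 Sg xs)) \<ge> ln (det (info_matrix A se2 Sg xi)))"

end

theory Submission
  imports Defs
begin

(* With c = sg2 (1 - rho) and b = sg2 rho, the matrix se2 I + M0^(1/2) Sigma M0^(1/2) is
   diagonal plus rank one, and the matrix determinant lemma gives
   det M(xi) = det(A)^2 / D_loss b h  with  h_j = se2 / I_j + c.
   So D-optimality means minimising D_loss over designs with positive counts.  Moving one
   observation from a time point k with I_k >= I_l + 2 to l does not increase D_loss, since
   h(I_k - 1), h(I_l + 1) have no larger sum and no larger product than h(I_k), h(I_l).
   Such moves strictly decrease the sum of the squared counts, so they end at a design whose
   counts differ by at most one, and all these designs have the same loss. *)

lemma det_diagonal_except_row:
  fixes A :: "'a::comm_ring_1^'n::finite^'n"
  assumes off_diag: "\<And>i j. i \<noteq> k \<Longrightarrow> i \<noteq> j \<Longrightarrow> A$i$j = 0"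
  shows "det A = (\<Prod>i\<in>UNIV. A$i$i)"
proof -
  have vanish: "\<forall>p \<in> {p. p permutes (UNIV :: 'n set)} - {id}. of_int (sign p) * (\<Prod>i\<in>UNIV. A$i$p i) = 0"
  proof
    fix p :: "'n \<Rightarrow> 'n"
    assume "p \<in> {p. p permutes UNIV} - {id}"
    then have p: "p permutes UNIV" "p \<noteq> id"
      by auto
    obtain i where i: "p i \<noteq> i"
      using p(2) by (auto simp: fun_eq_iff)
    \<comment> \<open>if \<open>p\<close> moves \<open>k\<close>, it also moves \<open>p k \<noteq> k\<close>\<close>
    have "\<exists>j. j \<noteq> k \<and> p j \<noteq> j"
    proof (cases "i = k")
      case True
      then have "p (p k) \<noteq> p k"
        using i permutes_inj[OF p(1)] by (metis injD)
      then show ?thesis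
        using i True by metis
    qed (use i in blast)
    then show "of_int (sign p) * (\<Prod>i\<in>UNIV. A$i$p i) = 0"
      using off_diag by (metis UNIV_I finite prod_zero mult_zero_right)
  qed
  have "{id} \<subseteq> {p. p permutes UNIV}"
    by (simp add: permutes_id)
  from sum.mono_neutral_cong_left[OF finite_permutations[OF finite_class.finite_UNIV] this vanish]
  show ?thesis
    unfolding det_def by (simp add: sign_id)
qed

lemma det_diagonal_replace_row:
  fixes d :: "'n::finite \<Rightarrow> 'a::comm_ring_1"
  shows "det (\<chi> i. if i = z then w else (\<chi> j. if i = j then d i else 0))
    = w$z * (\<Prod>i\<in>UNIV - {z}. d i)"
proof -
  have "det (\<chi> i. if i = z then w else (\<chi> j. if i = j then d i else 0))
      = (\<Prod>i\<in>UNIV. if i = z then w$z else d i)"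
    by (subst det_diagonal_except_row[of z]) (auto intro!: prod.cong)
  also have "\<dots> = w$z * (\<Prod>i\<in>UNIV - {z}. d i)"
    by (subst prod.remove[of _ z]) (auto intro!: prod.cong)
  finally show ?thesis .
qed

lemma det_add_row_multiples:
  fixes A :: "'a::comm_ring_1^'n::finite^'n"
  shows "det (\<chi> i. if i = z then A$z else A$i + u i *s A$z) = det A"
proof -
  have add_on_rows: "det (\<chi> i. if i \<in> T then A$i + u i *s A$z else A$i) = det A" if "z \<notin> T" for T
    using finite[of T] that
  proof (induction T rule: finite_induct)
    case empty
    then show ?case by simp
  next
    case (insert y T)
    let ?B = "\<chi> i. if i \<in> T then A$i + u i *s A$z else A$i"
    have "(\<chi> i. if i \<in> insert y T then A$i + u i *s A$z else A$i)
        = (\<chi> i. if i = y then row y ?B + u y *s row z ?B else row i ?B)"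
      using insert.hyps insert.prems by (auto simp: vec_eq_iff row_def)
    then show ?case
      using det_row_operation[of y z ?B "u y"] insert by auto
  qed
  have "det (\<chi> i. if i = z then A$z else A$i + u i *s A$z)
      = det (\<chi> i. if i \<in> UNIV - {z} then A$i + u i *s A$z else A$i)"
    by (rule arg_cong[where f = det]) (auto simp: vec_eq_iff)
  also have "\<dots> = det A"
    by (rule add_on_rows) simp
  finally show ?thesis .
qed

lemma det_diagonal_plus_rank_one:
  fixes d u v :: "'n::finite \<Rightarrow> 'a::comm_ring_1"
  shows "det (\<chi> i j. (if i = j then d i else 0) + u i * v j)
    = (\<Prod>i\<in>UNIV. d i) + (\<Sum>k\<in>UNIV. u k * v k * (\<Prod>i\<in>UNIV - {k}. d i))"
proof -
  define D :: "'n \<Rightarrow> 'a^'n" where "D i = (\<chi> j. if i = j then d i else 0)" for i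
  define w :: "'a^'n" where "w = (\<chi> j. v j)"
  let ?R = "\<lambda>T i. if i \<in> T then D i + u i *s w else D i"
  \<comment> \<open>The rank-one part is added one row at a time; in the new summand the row \<open>w\<close>
    clears the rank-one parts of all other rows.\<close>
  have rows_det: "det (\<chi> i. ?R T i) = (\<Prod>i\<in>UNIV. d i) + (\<Sum>k\<in>T. u k * v k * (\<Prod>i\<in>UNIV - {k}. d i))"
    for T
    using finite[of T]
  proof (induction T rule: finite_induct)
    case empty
    then show ?case
      by (simp add: D_def det_diagonal)
  next
    case (insert z T)
    have rank_one_row: "det (\<chi> i. if i = z then w else ?R T i) = v z * (\<Prod>i\<in>UNIV - {z}. d i)"
    proof -
      let ?B = "\<chi> i. if i = z then w else D i"
      have "det (\<chi> i. if i = z then w else ?R T i)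
          = det (\<chi> i. if i = z then ?B$z else ?B$i + (if i \<in> T then u i else 0) *s ?B$z)"
        by (rule arg_cong[where f = det]) (auto simp: vec_eq_iff)
      also have "\<dots> = det ?B"
        by (rule det_add_row_multiples)
      also have "\<dots> = v z * (\<Prod>i\<in>UNIV - {z}. d i)"
        unfolding D_def det_diagonal_replace_row by (simp add: w_def)
      finally show ?thesis .
    qed
    have "(\<chi> i. ?R (insert z T) i) = (\<chi> i. if i = z then D z + u z *s w else ?R T i)"
      by (auto simp: vec_eq_iff)
    then have "det (\<chi> i. ?R (insert z T) i)
        = det (\<chi> i. if i = z then D z else ?R T i) + u z * det (\<chi> i. if i = z then w else ?R T i)"
      by (simp only: det_row_add det_row_mul)
    also have "(\<chi> i. if i = z then D z else ?R T i) = (\<chi> i. ?R T i)"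
      using insert.hyps by (auto simp: vec_eq_iff)
    finally show ?case
      using insert by (simp add: rank_one_row algebra_simps)
  qed
  have "(\<chi> i j. (if i = j then d i else 0) + u i * v j) = (\<chi> i. ?R UNIV i)"
    by (simp add: vec_eq_iff D_def w_def)
  then show ?thesis
    using rows_det[of UNIV] by simp
qed

lemma det_matrix_inv:
  fixes X :: "'a::field^'n::finite^'n"
  assumes "invertible X"
  shows "det (matrix_inv X) = inverse (det X)"
proof -
  have "X ** matrix_inv X = mat 1"
    using assms unfolding invertible_def matrix_inv_def by (rule someI2_ex) blast
  then have "det X * det (matrix_inv X) = 1"
    by (metis det_I det_mul)
  then show ?thesis
    by (rule inverse_unique[symmetric])
qed

lemma diagonal_sandwich_nth:
  fixes S :: "'a::comm_semiring_1^'n::finite^'n"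
  shows "((\<chi> i j. if i = j then a i else 0) ** S ** (\<chi> i j. if i = j then a i else 0)) $ i $ j
    = a i * S$i$j * a j"
  by (simp add: matrix_matrix_mult_def if_distrib if_distribR cong: if_cong)

lemma cs_covariance_eq:
  "se2 *\<^sub>R mat 1 + M0_half n ** Sigma_cs sg2 rho ** M0_half n
    = (\<chi> i j. (if i = j then se2 + sg2 * (1 - rho) * real (n i) else 0)
              + sg2 * rho * sqrt (real (n i)) * sqrt (real (n j)))"
  by (auto simp: vec_eq_iff M0_half_def Sigma_cs_def diagonal_sandwich_nth mat_def algebra_simps)

lemma det_info_matrix:
  fixes A Sg :: "real^'n::finite^'n" and se2 :: real and n :: "'n \<Rightarrow> nat"
  defines "X \<equiv> se2 *\<^sub>R mat 1 + M0_half n ** Sg ** M0_half n"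
  assumes "det X \<noteq> 0"
  shows "det (info_matrix A se2 Sg n) = det A ^ 2 * (\<Prod>i\<in>UNIV. real (n i)) / det X"
proof -
  have "det (M0_half n) ^ 2 = (\<Prod>i\<in>UNIV. real (n i))"
    by (simp add: M0_half_def det_diagonal prod_power_distrib)
  moreover have "det (matrix_inv X) = inverse (det X)"
    using assms by (simp add: det_matrix_inv invertible_det_nz)
  ultimately show ?thesis
    unfolding info_matrix_def X_def[symmetric] det_mul det_transpose
    by (simp add: power2_eq_square field_simps)
qed

definition D_loss :: "real \<Rightarrow> ('n::finite \<Rightarrow> real) \<Rightarrow> real" where
  "D_loss b h = (\<Prod>i\<in>UNIV. h i) * (1 + b * (\<Sum>i\<in>UNIV. 1 / h i))"

lemma D_loss_pos:
  assumes "b \<ge> 0" and "\<And>i. h i > 0"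
  shows "D_loss b h > 0"
  using assms unfolding D_loss_def
  by (intro mult_pos_pos prod_pos add_pos_nonneg mult_nonneg_nonneg sum_nonneg) (auto simp: less_imp_le)

lemma det_cs_covariance:
  assumes "se2 > 0" and "sg2 \<ge> 0" and "rho \<le> 1" and "\<And>i. n i > 0"
  shows "det (se2 *\<^sub>R mat 1 + M0_half n ** Sigma_cs sg2 rho ** M0_half n)
    = (\<Prod>i\<in>UNIV. real (n i)) * D_loss (sg2 * rho) (\<lambda>i. se2 / real (n i) + sg2 * (1 - rho))"
proof -
  define d where "d i = se2 + sg2 * (1 - rho) * real (n i)" for i
  have d_pos: "d i > 0" for i
    using assms by (auto simp: d_def intro!: add_pos_nonneg)
  have prod_minus: "(\<Prod>i\<in>UNIV - {k}. d i) = (\<Prod>i\<in>UNIV. d i) / d k" for k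
    using d_pos[of k] by (simp add: prod.remove[of _ k] field_simps)
  have "det (se2 *\<^sub>R mat 1 + M0_half n ** Sigma_cs sg2 rho ** M0_half n)
      = (\<Prod>i\<in>UNIV. d i) + (\<Sum>k\<in>UNIV. sg2 * rho * real (n k) * (\<Prod>i\<in>UNIV - {k}. d i))"
    unfolding cs_covariance_eq det_diagonal_plus_rank_one d_def
    by (simp add: mult.assoc)
  also have "\<dots> = (\<Prod>i\<in>UNIV. d i) * (1 + sg2 * rho * (\<Sum>k\<in>UNIV. real (n k) / d k))"
    by (simp add: prod_minus sum_distrib_left algebra_simps)
  also have "\<dots> = (\<Prod>i\<in>UNIV. real (n i)) * D_loss (sg2 * rho) (\<lambda>i. d i / real (n i))"
    using assms(4) by (simp add: D_loss_def prod_dividef prod_pos field_simps)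
  also have "(\<lambda>i. d i / real (n i)) = (\<lambda>i. se2 / real (n i) + sg2 * (1 - rho))"
    using assms(4) by (simp add: d_def fun_eq_iff field_simps)
  finally show ?thesis .
qed

lemma det_info_matrix_cs:
  fixes A :: "real^'n::finite^'n"
  assumes "se2 > 0" "sg2 \<ge> 0" "0 \<le> rho" "rho \<le> 1" "\<And>i. n i > 0"
  shows "det (info_matrix A se2 (Sigma_cs sg2 rho) n)
      = det A ^ 2 / D_loss (sg2 * rho) (\<lambda>i. se2 / real (n i) + sg2 * (1 - rho))"
    and "D_loss (sg2 * rho) (\<lambda>i. se2 / real (n i) + sg2 * (1 - rho)) > 0"
proof -
  show loss_pos: "D_loss (sg2 * rho) (\<lambda>i. se2 / real (n i) + sg2 * (1 - rho)) > 0"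
    using assms by (intro D_loss_pos add_pos_nonneg) auto
  have "(\<Prod>i\<in>UNIV. real (n i)) > 0"
    using assms(5) by (simp add: prod_pos)
  then show "det (info_matrix A se2 (Sigma_cs sg2 rho) n)
      = det A ^ 2 / D_loss (sg2 * rho) (\<lambda>i. se2 / real (n i) + sg2 * (1 - rho))"
    using loss_pos det_info_matrix[of se2 n "Sigma_cs sg2 rho" A] det_cs_covariance[of se2 sg2 rho n] assms
    by simp
qed

context comm_monoid_set
begin

lemma remove_pair:
  assumes "finite A" "k \<in> A" "l \<in> A" "k \<noteq> l"
  shows "F g A = g k \<^bold>* g l \<^bold>* F g (A - {k, l})"
  using assms by (simp add: remove[of A k] remove[of "A - {k}" l] Diff_insert2[symmetric] assoc)

end

lemma D_loss_remove_pair: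
  assumes "k \<noteq> l" "h k \<noteq> 0" "h l \<noteq> 0"
  shows "D_loss b h = (\<Prod>i\<in>UNIV - {k, l}. h i)
    * (h k * h l * (1 + b * (\<Sum>i\<in>UNIV - {k, l}. 1 / h i)) + b * (h k + h l))"
  using assms unfolding D_loss_def
  by (simp add: prod.remove_pair[of UNIV k l] sum.remove_pair[of UNIV k l] field_simps)

lemma inverse_affine_transfer_le:
  fixes s c u v :: real
  assumes "s \<ge> 0" "c \<ge> 0" "v > 0" "v + 1 \<le> u"
  shows "(s / (u - 1) + c) + (s / (v + 1) + c) \<le> (s / u + c) + (s / v + c)"
    and "(s / (u - 1) + c) * (s / (v + 1) + c) \<le> (s / u + c) * (s / v + c)"
proof -
  have "u > 1"
    using assms by linarith
  have "1 / ((u - 1) * u) \<le> 1 / (v * (v + 1))"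
    using assms by (intro divide_left_mono mult_mono) auto
  moreover have "1 / (u - 1) - 1 / u = 1 / ((u - 1) * u)" "1 / v - 1 / (v + 1) = 1 / (v * (v + 1))"
    using assms \<open>u > 1\<close> by (simp_all add: field_simps)
  ultimately have recip_sum: "1 / (u - 1) + 1 / (v + 1) \<le> 1 / u + 1 / v"
    by linarith
  have "u * v \<le> (u - 1) * (v + 1)"
    using assms by (simp add: algebra_simps)
  then have recip_prod: "1 / ((u - 1) * (v + 1)) \<le> 1 / (u * v)"
    using assms \<open>u > 1\<close> by (intro divide_left_mono mult_pos_pos) auto
  show "(s / (u - 1) + c) + (s / (v + 1) + c) \<le> (s / u + c) + (s / v + c)"
    using mult_left_mono[OF recip_sum \<open>s \<ge> 0\<close>] by (simp add: field_simps)
  have "s * s * (1 / ((u - 1) * (v + 1))) + c * s * (1 / (u - 1) + 1 / (v + 1))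
      \<le> s * s * (1 / (u * v)) + c * s * (1 / u + 1 / v)"
    using assms recip_sum recip_prod by (intro add_mono[OF mult_left_mono mult_left_mono]) auto
  moreover have expand: "(s / p + c) * (s / q + c) = s * s * (1 / (p * q)) + c * s * (1 / p + 1 / q) + c * c"
    for p q :: real
    by (simp add: divide_inverse algebra_simps)
  ultimately show "(s / (u - 1) + c) * (s / (v + 1) + c) \<le> (s / u + c) * (s / v + c)"
    by (simp only: expand)
qed

lemma D_loss_exchange_le:
  assumes "k \<noteq> l" "b \<ge> 0" "\<And>i. h i > 0" "x > 0" "y > 0"
    and "x * y \<le> h k * h l" "x + y \<le> h k + h l"
  shows "D_loss b (h(k := x, l := y)) \<le> D_loss b h"
proof -
  let ?W = "UNIV - {k, l}"
  have same_rest: "(\<Prod>i\<in>?W. (h(k := x, l := y)) i) = (\<Prod>i\<in>?W. h i)"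
    "(\<Sum>i\<in>?W. 1 / (h(k := x, l := y)) i) = (\<Sum>i\<in>?W. 1 / h i)"
    by (auto intro!: prod.cong sum.cong)
  have "0 \<le> (\<Sum>i\<in>?W. 1 / h i)"
    using assms(3) by (simp add: sum_nonneg less_imp_le)
  then have "x * y * (1 + b * (\<Sum>i\<in>?W. 1 / h i)) + b * (x + y)
      \<le> h k * h l * (1 + b * (\<Sum>i\<in>?W. 1 / h i)) + b * (h k + h l)"
    using assms by (intro add_mono[OF mult_right_mono mult_left_mono]) auto
  moreover have "0 < (\<Prod>i\<in>?W. h i)"
    using assms(3) by (simp add: prod_pos)
  moreover have "h k \<noteq> 0" "h l \<noteq> 0"
    using assms(3) by (metis less_irrefl)+
  ultimately show ?thesis
    using assms by (simp add: D_loss_remove_pair[of k l] same_rest)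
qed

lemma D_loss_transfer_le:
  fixes n :: "'n::finite \<Rightarrow> nat"
  assumes "s > 0" "c \<ge> 0" "b \<ge> 0" "\<And>i. n i > 0" "n l < n k"
  shows "D_loss b (\<lambda>i. s / real ((n(k := n k - 1, l := n l + 1)) i) + c)
    \<le> D_loss b (\<lambda>i. s / real (n i) + c)"
proof -
  let ?h = "\<lambda>i. s / real (n i) + c"
  have "k \<noteq> l"
    using assms(5) by auto
  have "(\<lambda>i. s / real ((n(k := n k - 1, l := n l + 1)) i) + c)
      = ?h(k := s / (real (n k) - 1) + c, l := s / (real (n l) + 1) + c)"
    using \<open>k \<noteq> l\<close> assms(5) by (auto simp: fun_eq_iff of_nat_diff)
  moreover have "real (n l) + 1 \<le> real (n k)" "real (n l) > 0" "real (n k) - 1 > 0"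
    using assms(4)[of l] assms(5) by auto
  ultimately show ?thesis
    using assms \<open>k \<noteq> l\<close> inverse_affine_transfer_le[of s c "real (n l)" "real (n k)"]
    by (auto intro!: D_loss_exchange_le add_pos_nonneg)
qed

lemma balancing_descent:
  fixes F :: "('n::finite \<Rightarrow> nat) \<Rightarrow> real"
  assumes transfer: "\<And>n k l. \<forall>i. n i > 0 \<Longrightarrow> n l + 2 \<le> n k
      \<Longrightarrow> F (n(k := n k - 1, l := n l + 1)) \<le> F n"
    and "\<forall>i. n i > 0"
  shows "\<exists>m. (\<Sum>i\<in>UNIV. m i) = (\<Sum>i\<in>UNIV. n i) \<and> (\<forall>k l. m k \<le> m l + 1) \<and> F m \<le> F n"
  using assms(2)
proof (induction "\<Sum>i\<in>UNIV. n i ^ 2" arbitrary: n rule: less_induct)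
  case less
  show ?case
  proof (cases "\<forall>k l. n k \<le> n l + 1")
    case True
    then show ?thesis
      by blast
  next
    case False
    then obtain k l where "n l + 1 < n k"
      by (auto simp: not_le)
    then have kl: "n l + 2 \<le> n k"
      by simp
    define n' where "n' = n(k := n k - 1, l := n l + 1)"
    have "k \<noteq> l"
      using kl by auto
    have n'_pos: "\<forall>i. n' i > 0"
      using less.prems kl by (simp add: n'_def)
    have same_rest: "(\<Sum>i\<in>UNIV - {k, l}. n' i) = (\<Sum>i\<in>UNIV - {k, l}. n i)"
      "(\<Sum>i\<in>UNIV - {k, l}. n' i ^ 2) = (\<Sum>i\<in>UNIV - {k, l}. n i ^ 2)"
      by (auto simp: n'_def intro!: sum.cong)
    have "(n k - 1) ^ 2 + (n l + 1) ^ 2 < n k ^ 2 + n l ^ 2"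
      using kl by (auto simp: power2_eq_square algebra_simps dest!: le_Suc_ex)
    then have "(\<Sum>i\<in>UNIV. n' i ^ 2) < (\<Sum>i\<in>UNIV. n i ^ 2)"
      using \<open>k \<noteq> l\<close> by (simp add: sum.remove_pair[of UNIV k l] same_rest n'_def)
    moreover have "(\<Sum>i\<in>UNIV. n' i) = (\<Sum>i\<in>UNIV. n i)"
      using \<open>k \<noteq> l\<close> kl by (simp add: sum.remove_pair[of UNIV k l] same_rest n'_def)
    moreover have "F n' \<le> F n"
      unfolding n'_def using transfer less.prems kl by blast
    ultimately show ?thesis
      using less.hyps[OF _ n'_pos] by fastforce
  qed
qed

definition balanced :: "nat \<Rightarrow> ('n::finite \<Rightarrow> nat) \<Rightarrow> bool" where
  "balanced I n \<longleftrightarrow> (\<forall>j. n j = I div CARD('n) \<or> n j = I div CARD('n) + 1)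
    \<and> card {j. n j = I div CARD('n) + 1} = I mod CARD('n)"

lemma sum_two_valued:
  fixes n :: "'n::finite \<Rightarrow> nat"
  assumes "\<forall>i. n i = q \<or> n i = q + 1"
  shows "(\<Sum>i\<in>UNIV. n i) = CARD('n) * q + card {i. n i = q + 1}"
proof -
  have "(\<Sum>i\<in>UNIV. n i) = (\<Sum>i\<in>UNIV. q + (if n i = q + 1 then 1 else 0))"
    using assms by (intro sum.cong) auto
  then show ?thesis
    by (simp add: sum.distrib sum.If_cases)
qed

lemma sum_prod_comp_two_valued:
  fixes n :: "'n::finite \<Rightarrow> nat" and g :: "nat \<Rightarrow> 'a::comm_semiring_1"
  assumes "\<forall>i. n i = q \<or> n i = q + 1"
  defines "c \<equiv> card {i. n i = q + 1}"
  shows "(\<Sum>i\<in>UNIV. g (n i)) = of_nat c * g (q + 1) + of_nat (CARD('n) - c) * g q"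
    and "(\<Prod>i\<in>UNIV. g (n i)) = g (q + 1) ^ c * g q ^ (CARD('n) - c)"
proof -
  have g_n: "g (n i) = (if n i = q + 1 then g (q + 1) else g q)" for i
    using assms(1) by (metis add_right_cancel add_0_right one_neq_zero)
  have "card (UNIV \<inter> - {i. n i = q + 1}) = CARD('n) - c"
    by (simp add: c_def Compl_eq_Diff_UNIV card_Diff_subset)
  then show "(\<Sum>i\<in>UNIV. g (n i)) = of_nat c * g (q + 1) + of_nat (CARD('n) - c) * g q"
    and "(\<Prod>i\<in>UNIV. g (n i)) = g (q + 1) ^ c * g q ^ (CARD('n) - c)"
    by (simp_all add: g_n c_def sum.If_cases prod.If_cases)
qed

lemma balanced_imp_exact_design:
  fixes n :: "'n::finite \<Rightarrow> nat"
  assumes "balanced I n"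
  shows "exact_design I n"
  using assms sum_two_valued[of n "I div CARD('n)"]
  by (simp add: balanced_def exact_design_def)

lemma spread_le_one_imp_balanced:
  fixes n :: "'n::finite \<Rightarrow> nat"
  assumes "\<forall>k l. n k \<le> n l + 1"
  shows "balanced (\<Sum>i\<in>UNIV. n i) n"
proof -
  define q where "q = Min (range n)"
  have "q \<in> range n"
    unfolding q_def by (rule Min_in) auto
  then obtain i0 where i0: "n i0 = q"
    by auto
  have two_valued: "\<forall>i. n i = q \<or> n i = q + 1"
  proof
    fix i
    have "q \<le> n i"
      unfolding q_def by (rule Min_le) auto
    moreover have "n i \<le> q + 1"
      using assms i0 by metis
    ultimately show "n i = q \<or> n i = q + 1"
      by linarith
  qed
  have "i0 \<notin> {i. n i = q + 1}"
    using i0 by simp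
  then have "{i. n i = q + 1} \<subset> UNIV"
    by blast
  then have "card {i. n i = q + 1} < CARD('n)"
    by (rule psubset_card_mono[OF finite_class.finite_UNIV])
  moreover have "(\<Sum>i\<in>UNIV. n i) = card {i. n i = q + 1} + CARD('n) * q"
    using sum_two_valued[OF two_valued] by simp
  ultimately show ?thesis
    using two_valued by (simp add: balanced_def)
qed

lemma balanced_pos:
  fixes n :: "'n::finite \<Rightarrow> nat"
  assumes "balanced I n" "CARD('n) \<le> I"
  shows "n i > 0"
proof -
  have "I div CARD('n) > 0"
    using assms(2) by (simp add: div_greater_zero_iff)
  then show ?thesis
    using assms(1) by (auto simp: balanced_def dest: spec[of _ i])
qed

lemma D_loss_balanced_eq:
  fixes n m :: "'n::finite \<Rightarrow> nat"
  assumes "balanced I n" "balanced I m"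
  shows "D_loss b (\<lambda>i. g (n i)) = D_loss b (\<lambda>i. g (m i))"
proof -
  let ?q = "I div CARD('n)"
  have n: "\<forall>i. n i = ?q \<or> n i = ?q + 1" "card {i. n i = ?q + 1} = I mod CARD('n)"
    and m: "\<forall>i. m i = ?q \<or> m i = ?q + 1" "card {i. m i = ?q + 1} = I mod CARD('n)"
    using assms by (simp_all add: balanced_def)
  show ?thesis
    unfolding D_loss_def sum_prod_comp_two_valued(2)[OF n(1)] sum_prod_comp_two_valued(2)[OF m(1)]
      sum_prod_comp_two_valued(1)[OF n(1), of "\<lambda>x. 1 / g x"] sum_prod_comp_two_valued(1)[OF m(1), of "\<lambda>x. 1 / g x"]
      n(2) m(2) ..
qed

lemma balanced_minimises_D_loss:
  fixes n xs :: "'n::finite \<Rightarrow> nat"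
  assumes "s > 0" "c \<ge> 0" "b \<ge> 0" "balanced I xs" "\<forall>i. n i > 0" "(\<Sum>i\<in>UNIV. n i) = I"
  shows "D_loss b (\<lambda>i. s / real (xs i) + c) \<le> D_loss b (\<lambda>i. s / real (n i) + c)"
proof -
  define L where "L n = D_loss b (\<lambda>i. s / real (n i) + c)" for n :: "'n \<Rightarrow> nat"
  have transfer: "L (n(k := n k - 1, l := n l + 1)) \<le> L n"
    if "\<forall>i. n i > 0" "n l + 2 \<le> n k" for n :: "'n \<Rightarrow> nat" and k l
    unfolding L_def using assms that by (intro D_loss_transfer_le) auto
  obtain m where m: "(\<Sum>i\<in>UNIV. m i) = I" "\<forall>k l. m k \<le> m l + 1" "L m \<le> L n"
    using balancing_descent[of L n] transfer assms(5) unfolding assms(6) by blast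
  have "balanced I m"
    using spread_le_one_imp_balanced[OF m(2)] m(1) by simp
  then have "L xs = L m"
    unfolding L_def by (rule D_loss_balanced_eq[OF assms(4)])
  then show ?thesis
    using m(3) by (simp add: L_def)
qed

lemma D_optimal_exact_balanced:
  fixes A :: "real^'n::finite^'n"
  assumes "se2 > 0" "sg2 \<ge> 0" "0 \<le> rho" "rho \<le> 1" "invertible A" "balanced I xs"
  shows "D_optimal_exact A se2 (Sigma_cs sg2 rho) I xs"
proof -
  define L where "L n = D_loss (sg2 * rho) (\<lambda>i. se2 / real (n i) + sg2 * (1 - rho))"
    for n :: "'n \<Rightarrow> nat"
  have det_info: "det (info_matrix A se2 (Sigma_cs sg2 rho) n) = det A ^ 2 / L n" "L n > 0"
    if "\<forall>i. n i > 0" for n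
    using det_info_matrix_cs(1)[of se2 sg2 rho n A] det_info_matrix_cs(2)[of se2 sg2 rho n] assms that
    by (simp_all add: L_def)
  have "ln (det (info_matrix A se2 (Sigma_cs sg2 rho) xi))
      \<le> ln (det (info_matrix A se2 (Sigma_cs sg2 rho) xs))"
    if "exact_design I xi" "estimable A xi" for xi
  proof -
    have xi_pos: "\<forall>i. xi i > 0"
      using that(2) by (simp add: estimable_def)
    have "CARD('n) \<le> I"
      using that(1) xi_pos sum_mono[of UNIV "\<lambda>_. 1" xi] by (simp add: exact_design_def Suc_le_eq)
    then have xs_pos: "\<forall>i. xs i > 0"
      using balanced_pos[OF assms(6)] by blast
    have "L xs \<le> L xi"
      unfolding L_def using assms xi_pos that(1)
      by (intro balanced_minimises_D_loss) (auto simp: exact_design_def)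
    moreover have "det A ^ 2 > 0"
      using assms(5) by (simp add: invertible_det_nz)
    ultimately show ?thesis
      using det_info[OF xi_pos] det_info[OF xs_pos] by (simp add: divide_left_mono)
  qed
  then show ?thesis
    using balanced_imp_exact_design[OF assms(6)] by (simp add: D_optimal_exact_def)
qed

theorem lemma3:
  fixes A :: "real^'n::finite^'n" and se2 sg2 rho :: real and I :: nat
    and xs :: "'n \<Rightarrow> nat"
  assumes "se2 > 0" and "sg2 > 0" and "0 \<le> rho" and "rho \<le> 1"
    and "invertible A" and "I > 0"
    and "\<forall>j. xs j = I div CARD('n) \<or> xs j = I div CARD('n) + 1"
    and "card {j. xs j = I div CARD('n) + 1} = I mod CARD('n)"
  shows "D_optimal_exact A se2 (Sigma_cs sg2 rho) I xs
    \<and> (I mod CARD('n) = 0 \<longrightarrow>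
         D_optimal_exact A se2 (Sigma_cs sg2 rho) I (\<lambda>j. I div CARD('n)))"
proof
  show "D_optimal_exact A se2 (Sigma_cs sg2 rho) I xs"
    using assms by (intro D_optimal_exact_balanced) (simp_all add: balanced_def)
  show "I mod CARD('n) = 0 \<longrightarrow> D_optimal_exact A se2 (Sigma_cs sg2 rho) I (\<lambda>j. I div CARD('n))"
    using assms by (auto intro: D_optimal_exact_balanced simp: balanced_def)
qed

end
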